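(* Let $A\in\tilde\omega_n^{0,1}$ and suppose $G_A$ contains a directed cycle $C$: $v_{i_1}\to v_{i_2}\to\cdots\to v_{i_r}\to v_{i_1}$ with edge weights $a_{i_1i_2},\dots,a_{i_ri_1}$. Let $\tilde A$ be the $(n-r)\times(n-r)$ principal submatrix of $A$ obtained by deleting rows and columns $i_1,\dots,i_r$ (with $\operatorname{per}$ of the empty matrix equal to $1$). Then $$\operatorname{per}(I-A)=\operatorname{per}(I-\tilde A)\,\big(1+(-1)^r a_{i_1i_2}a_{i_2i_3}\cdots a_{i_ri_1}\big).$$
   Context: An $n\times n$ matrix is row substochastic if all its entries are nonnegative and each row sum is at most $1$. $\tilde\omega_n^{0,1}$ denotes the set of all $n\times n$ row substochastic matrices with zero main diagonal and at most one positive entry in each row. For an $n\times n$ matrix $A=[a_{ij}]$, $G_A$ is the directed weighted graph on vertices $v_1,\dots,v_n$ having a directed edge $v_i\to v_j$ of weight $a_{ij}$ exactly when $a_{ij}\ne 0$. The permanent is $\operatorname{per}(M)=\sum_{\pi\in S_n}\prod_i m_{i\pi(i)}$, and $I$ denotes an identity matrix of the appropriate size. *)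

theory Defs
  imports "HOL-Combinatorics.Permutations" Complex_Main
begin

text \<open>n x n matrices are represented as functions nat => nat => real,
  of which only the entries with indices in {..<n} matter.\<close>

definition row_substochastic :: "nat \<Rightarrow> (nat \<Rightarrow> nat \<Rightarrow> real) \<Rightarrow> bool" where
  "row_substochastic n A \<longleftrightarrow>
     (\<forall>i<n. \<forall>j<n. 0 \<le> A i j) \<and> (\<forall>i<n. (\<Sum>j<n. A i j) \<le> 1)"

definition omega01 :: "nat \<Rightarrow> (nat \<Rightarrow> nat \<Rightarrow> real) \<Rightarrow> bool" where
  "omega01 n A \<longleftrightarrow> row_substochastic n A \<and> (\<forall>i<n. A i i = 0) \<and>
     (\<forall>i<n. card {j. j < n \<and> 0 < A i j} \<le> 1)"

definition graph_edge :: "nat \<Rightarrow> (nat \<Rightarrow> nat \<Rightarrow> real) \<Rightarrow> nat \<Rightarrow> nat \<Rightarrow> bool" where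
  "graph_edge n A i j \<longleftrightarrow> i < n \<and> j < n \<and> A i j \<noteq> 0"

definition directed_cycle :: "nat \<Rightarrow> (nat \<Rightarrow> nat \<Rightarrow> real) \<Rightarrow> nat list \<Rightarrow> bool" where
  "directed_cycle n A c \<longleftrightarrow> c \<noteq> [] \<and> distinct c \<and>
     (\<forall>k < length c. graph_edge n A (c ! k) (c ! ((k + 1) mod length c)))"

text \<open>Permanent of the principal submatrix of M with rows/columns indexed by the finite set S
  (the permanent of the empty matrix is 1).\<close>
definition per_on :: "nat set \<Rightarrow> (nat \<Rightarrow> nat \<Rightarrow> real) \<Rightarrow> real" where
  "per_on S M = (\<Sum>p \<in> {p. p permutes S}. \<Prod>i\<in>S. M i (p i))"

definition idm :: "nat \<Rightarrow> nat \<Rightarrow> real" where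
  "idm i j = (if i = j then 1 else 0)"

end

theory Submission
  imports Defs "HOL-Combinatorics.Cycles"
begin

text \<open>Since A has at most one positive entry per row, a row of I - A indexed by a vertex of the
  cycle is supported on the diagonal and on the column of its successor along the cycle. So I - A
  is block triangular with respect to the cycle vertices and the remaining ones, and its permanent
  is the permanent of the cycle block times per(I - \<open>\<tilde>A\<close>). In the cycle block only the identity
  (weight 1) and the cyclic shift (weight (-1)^r a_{i_1 i_2} ... a_{i_r i_1}) have nonzero weight.\<close>

lemma permutes_restrict_id_invariant:
  assumes "p permutes S" "finite C" "C \<subseteq> S" "p ` C \<subseteq> C"
  shows "restrict_id p C permutes C" "restrict_id p (S - C) permutes (S - C)"
    and "restrict_id p C \<circ> restrict_id p (S - C) = p"
proof -
  have pC: "p ` C = C"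
    using endo_inj_surj[OF assms(2,4)] permutes_inj_on[OF assms(1)] by blast
  then show "restrict_id p C permutes C"
    using permutes_inj_on[OF assms(1)] by (intro permutes_restrict_id) (simp add: bij_betw_def)
  have "p ` (S - C) = S - C"
    using pC permutes_image[OF assms(1)] permutes_inj[OF assms(1)]
    by (metis image_set_diff)
  then show "restrict_id p (S - C) permutes (S - C)"
    using permutes_inj_on[OF assms(1)] by (intro permutes_restrict_id) (simp add: bij_betw_def)
  show "restrict_id p C \<circ> restrict_id p (S - C) = p"
  proof
    fix x
    show "(restrict_id p C \<circ> restrict_id p (S - C)) x = p x"
      using pC permutes_in_image[OF assms(1)] permutes_not_in[OF assms(1)] assms(3)
        inj_image_mem_iff[OF permutes_inj[OF assms(1)], of x C]
      by (cases "x \<in> C"; cases "x \<in> S") (auto simp: restrict_id_def)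
  qed
qed

lemma restrict_id_compose_disjoint:
  assumes "p permutes C" "q permutes D" "C \<inter> D = {}"
  shows "restrict_id (p \<circ> q) C = p" "restrict_id (p \<circ> q) D = q"
  using permutes_not_in[OF assms(1)] permutes_not_in[OF assms(2)] permutes_in_image[OF assms(2)] assms(3)
  by (auto simp: restrict_id_def fun_eq_iff) (metis disjoint_iff)

lemma bij_betw_compose_permutes_invariant:
  assumes "C \<subseteq> S" "finite C"
  shows "bij_betw (\<lambda>(p, q). p \<circ> q) ({p. p permutes C} \<times> {q. q permutes S - C})
    {p. p permutes S \<and> p ` C \<subseteq> C}"
proof (rule bij_betw_byWitness[where f' = "\<lambda>p. (restrict_id p C, restrict_id p (S - C))"],
    goal_cases)
  case 1
  show ?case using restrict_id_compose_disjoint[of _ C _ "S - C"] by auto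
next
  case 2
  show ?case using permutes_restrict_id_invariant(3) assms(2,1) by auto
next
  case 3
  have "p \<circ> q \<in> {p. p permutes S \<and> p ` C \<subseteq> C}"
    if p: "p permutes C" and q: "q permutes S - C" for p q
  proof -
    have "(p \<circ> q) permutes S"
      using permutes_subset[OF p assms(1)] permutes_subset[OF q] by (simp add: permutes_compose)
    moreover have "(p \<circ> q) ` C \<subseteq> C"
      using permutes_not_in[OF q] permutes_in_image[OF p] by auto
    ultimately show ?thesis by simp
  qed
  then show ?case by fastforce
next
  case 4
  show ?case using permutes_restrict_id_invariant(1,2) assms(2,1) by auto
qed

lemma per_on_block_triangular:
  fixes M :: "nat \<Rightarrow> nat \<Rightarrow> real"
  assumes "finite S" "C \<subseteq> S"
    and zero_block: "\<And>i j. i \<in> C \<Longrightarrow> j \<in> S - C \<Longrightarrow> M i j = 0"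
  shows "per_on S M = per_on C M * per_on (S - C) M"
proof -
  define w where "w T p = (\<Prod>i\<in>T. M i (p i))" for T and p :: "nat \<Rightarrow> nat"
  define P where "P = {p. p permutes S \<and> p ` C \<subseteq> C}"
  have finC: "finite C" using assms(1,2) finite_subset by blast
  have "per_on S M = sum (w S) {p. p permutes S}" by (simp add: per_on_def w_def)
  also have "\<dots> = sum (w S) P"
  proof (rule sum.mono_neutral_right)
    show "finite {p. p permutes S}" using assms(1) by (rule finite_permutations)
    show "P \<subseteq> {p. p permutes S}" by (auto simp: P_def)
    show "\<forall>p\<in>{p. p permutes S} - P. w S p = 0"
    proof
      fix p assume "p \<in> {p. p permutes S} - P"
      then obtain x where x: "x \<in> C" "p x \<notin> C" and p: "p permutes S" by (auto simp: P_def)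
      then have "p x \<in> S - C" using assms(2) permutes_in_image[OF p] by blast
      then have "M x (p x) = 0" using zero_block[OF x(1)] by simp
      then show "w S p = 0" using assms(1,2) x(1) unfolding w_def by (intro prod_zero) auto
    qed
  qed
  also have "\<dots> = (\<Sum>(p, q)\<in>{p. p permutes C} \<times> {q. q permutes S - C}. w S (p \<circ> q))"
    using sum.reindex_bij_betw[OF bij_betw_compose_permutes_invariant[OF assms(2) finC], of "w S"]
    by (simp add: P_def case_prod_unfold)
  also have "\<dots> = (\<Sum>(p, q)\<in>{p. p permutes C} \<times> {q. q permutes S - C}. w C p * w (S - C) q)"
  proof (rule sum.cong[OF refl], clarify)
    fix p q assume p: "p permutes C" and q: "q permutes S - C"
    have "w S (p \<circ> q) = w (S - C) (p \<circ> q) * w C (p \<circ> q)"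
      unfolding w_def by (rule prod.subset_diff[OF assms(2,1)])
    moreover have "w C (p \<circ> q) = w C p"
      unfolding w_def using permutes_not_in[OF q] by simp
    moreover have "w (S - C) (p \<circ> q) = w (S - C) q"
      unfolding w_def
    proof (rule prod.cong[OF refl])
      fix i assume "i \<in> S - C"
      then have "q i \<notin> C" using permutes_in_image[OF q] by blast
      then show "M i ((p \<circ> q) i) = M i (q i)" using permutes_not_in[OF p] by simp
    qed
    ultimately show "w S (p \<circ> q) = w C p * w (S - C) q" by simp
  qed
  also have "\<dots> = per_on C M * per_on (S - C) M"
    by (simp add: per_on_def w_def sum_product sum.cartesian_product)
  finally show ?thesis .
qed

lemma cycle_of_list_nth:
  assumes "distinct c" "k < length c"
  shows "cycle_of_list c (c ! k) = c ! ((k + 1) mod length c)"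
proof -
  have "map (cycle_of_list c) c = rotate1 c"
    using cyclic_rotation[of c 1] assms(1) by simp
  then have "map (cycle_of_list c) c ! k = rotate1 c ! k" by simp
  then show ?thesis using assms(2) by (simp add: nth_rotate1)
qed

lemma permutes_along_cycle:
  assumes "distinct c" and q: "q permutes set c"
    and step: "\<And>k. k < length c
      \<Longrightarrow> q (c ! k) = c ! k \<or> q (c ! k) = c ! ((k + 1) mod length c)"
  shows "q = id \<or> q = cycle_of_list c"
proof (cases "\<forall>k < length c. q (c ! k) = c ! k")
  case True
  then have "q x = x" for x
    using permutes_not_in[OF q] by (metis in_set_conv_nth)
  then show ?thesis by auto
next
  case False
  define r where "r = length c"
  define succ where "succ k = (k + 1) mod r" for k
  from False step obtain j where j: "j < r" "q (c ! j) = c ! succ j"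
    by (auto simp: r_def succ_def)
  have succ_lt: "succ k < r" for k using j(1) by (simp add: succ_def)
  \<comment> \<open>a vertex moved to its successor forces, by injectivity, the successor to move as well\<close>
  have along: "q (c ! ((j + m) mod r)) = c ! succ ((j + m) mod r)" for m
  proof (induction m)
    case 0 then show ?case using j by simp
  next
    case (Suc m)
    define a where "a = (j + m) mod r"
    have "a < r" using j(1) by (simp add: a_def)
    have a_succ: "succ a = (j + Suc m) mod r" by (simp add: a_def succ_def mod_Suc_eq)
    have "q (c ! succ a) = c ! succ a \<or> q (c ! succ a) = c ! succ (succ a)"
      using step[of "succ a"] succ_lt[of a] by (simp only: r_def succ_def)
    then show ?case
    proof
      assume fixed: "q (c ! succ a) = c ! succ a"
      then have "q (c ! succ a) = q (c ! a)" using Suc by (simp add: a_def)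
      then have "succ a = a"
        using permutes_inj[OF q] assms(1) succ_lt[of a] \<open>a < r\<close>
        by (simp add: inj_eq nth_eq_iff_index_eq r_def a_def)
      with fixed show ?thesis by (simp add: a_succ)
    qed (simp add: a_succ)
  qed
  have on_cycle: "q (c ! k) = cycle_of_list c (c ! k)" if "k < r" for k
    using along[of "k + r - j"] j(1) that cycle_of_list_nth[OF assms(1)]
    by (simp add: succ_def r_def)
  have "q x = cycle_of_list c x" for x
  proof (cases "x \<in> set c")
    case True
    then obtain k where "k < r" "x = c ! k" by (auto simp: r_def in_set_conv_nth)
    then show ?thesis using on_cycle by simp
  next
    case False
    then show ?thesis using permutes_not_in[OF q] id_outside_supp[of x c] by simp
  qed
  then have "q = cycle_of_list c" ..
  then show ?thesis ..
qed

lemma per_on_cycle: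
  fixes M :: "nat \<Rightarrow> nat \<Rightarrow> real"
  assumes "distinct c" "2 \<le> length c"
    and support: "\<And>k j. k < length c \<Longrightarrow> j \<in> set c \<Longrightarrow> M (c ! k) j \<noteq> 0
      \<Longrightarrow> j = c ! k \<or> j = c ! ((k + 1) mod length c)"
  shows "per_on (set c) M
    = (\<Prod>i\<in>set c. M i i) + (\<Prod>k < length c. M (c ! k) (c ! ((k + 1) mod length c)))"
proof -
  define \<sigma> where "\<sigma> = cycle_of_list c"
  define w where "w p = (\<Prod>i\<in>set c. M i (p i))" for p
  have \<sigma>: "\<sigma> permutes set c" unfolding \<sigma>_def by (rule cycle_permutes)
  have "c \<noteq> []" using assms(2) by auto
  then have "\<sigma> (c ! 0) = c ! 1"
    using cycle_of_list_nth[OF assms(1), of 0] assms(2) by (simp add: \<sigma>_def)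
  moreover have "c ! 1 \<noteq> c ! 0"
    using nth_eq_iff_index_eq[OF assms(1), of 1 0] assms(2) \<open>c \<noteq> []\<close> by simp
  ultimately have "\<sigma> \<noteq> id" by auto
  have "per_on (set c) M = sum w {p. p permutes set c}" by (simp add: per_on_def w_def)
  also have "\<dots> = sum w {id, \<sigma>}"
  proof (rule sum.mono_neutral_right)
    show "\<forall>p \<in> {p. p permutes set c} - {id, \<sigma>}. w p = 0"
    proof
      fix p assume "p \<in> {p. p permutes set c} - {id, \<sigma>}"
      then have p: "p permutes set c" and "p \<noteq> id" "p \<noteq> cycle_of_list c"
        by (auto simp: \<sigma>_def)
      then obtain k where k: "k < length c"
        and "p (c ! k) \<noteq> c ! k" "p (c ! k) \<noteq> c ! ((k + 1) mod length c)"
        using permutes_along_cycle[OF assms(1) p] by blast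
      moreover have "p (c ! k) \<in> set c" using permutes_in_image[OF p] nth_mem[OF k] by blast
      ultimately have "M (c ! k) (p (c ! k)) = 0" using support[OF k] by blast
      then show "w p = 0" unfolding w_def using nth_mem[OF k] by (intro prod_zero) auto
    qed
  qed (use \<sigma> permutes_id finite_permutations in auto)
  also have "\<dots> = w id + w \<sigma>" using \<open>\<sigma> \<noteq> id\<close> by simp
  also have "w \<sigma> = (\<Prod>k < length c. M (c ! k) (c ! ((k + 1) mod length c)))"
  proof -
    have "set c = (!) c ` {..<length c}" by (auto simp: in_set_conv_nth)
    then have "w \<sigma> = (\<Prod>k < length c. M (c ! k) (\<sigma> (c ! k)))"
      using inj_on_nth[OF assms(1), of "{..<length c}"] by (simp add: w_def prod.reindex)
    then show ?thesis using cycle_of_list_nth[OF assms(1)] by (simp add: \<sigma>_def)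
  qed
  finally show ?thesis by (simp add: w_def)
qed

lemma omega01_row_nonzero_unique:
  assumes "omega01 n A" "i < n" "j < n" "j' < n" "A i j \<noteq> 0" "A i j' \<noteq> 0"
  shows "j = j'"
proof -
  let ?T = "{j. j < n \<and> 0 < A i j}"
  have "0 \<le> A i j" "0 \<le> A i j'" and "card ?T \<le> 1"
    using assms(1-4) unfolding omega01_def row_substochastic_def by auto
  moreover have "finite ?T" by simp
  ultimately show ?thesis
    using assms(3-6) by (auto simp: card_le_Suc0_iff_eq)
qed

lemma omega01_cycle_length:
  assumes "omega01 n A" "directed_cycle n A c"
  shows "2 \<le> length c"
proof (rule ccontr)
  assume "\<not> 2 \<le> length c"
  moreover have "c \<noteq> []" using assms(2) by (simp add: directed_cycle_def)
  ultimately have "length c = 1" by (cases "length c") auto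
  with assms show False
    unfolding omega01_def directed_cycle_def graph_edge_def by auto
qed

lemma directed_cycle_subset:
  assumes "directed_cycle n A c"
  shows "set c \<subseteq> {..<n}"
  using assms by (auto simp: directed_cycle_def graph_edge_def in_set_conv_nth)

lemma omega01_cycle_row_support:
  assumes "omega01 n A" "directed_cycle n A c" "k < length c" "j < n"
    and "idm (c ! k) j - A (c ! k) j \<noteq> 0"
  shows "j = c ! k \<or> j = c ! ((k + 1) mod length c)"
proof (rule disjCI)
  assume "j \<noteq> c ! ((k + 1) mod length c)"
  with omega01_row_nonzero_unique[OF assms(1), of "c ! k" j] assms(2-4)
  have "A (c ! k) j = 0" by (auto simp: directed_cycle_def graph_edge_def)
  with assms(5) show "j = c ! k" by (auto simp: idm_def split: if_splits)
qed

lemma omega01_per_on_cycle: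
  assumes "omega01 n A" "directed_cycle n A c"
  shows "per_on (set c) (\<lambda>i j. idm i j - A i j)
    = 1 + (-1) ^ length c * (\<Prod>k < length c. A (c ! k) (c ! ((k + 1) mod length c)))"
proof -
  define succ where "succ k = c ! ((k + 1) mod length c)" for k
  have "distinct c" and edge: "\<And>k. k < length c \<Longrightarrow> A (c ! k) (succ k) \<noteq> 0"
    using assms(2) by (auto simp: directed_cycle_def graph_edge_def succ_def)
  have diag: "A i i = 0" if "i \<in> set c" for i
    using assms(1) directed_cycle_subset[OF assms(2)] that by (auto simp: omega01_def)
  have "per_on (set c) (\<lambda>i j. idm i j - A i j)
      = (\<Prod>i\<in>set c. idm i i - A i i) + (\<Prod>k < length c. idm (c ! k) (succ k) - A (c ! k) (succ k))"
    unfolding succ_def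
    using omega01_cycle_row_support[OF assms] directed_cycle_subset[OF assms(2)]
    by (intro per_on_cycle \<open>distinct c\<close> omega01_cycle_length[OF assms]) auto
  also have "(\<Prod>i\<in>set c. idm i i - A i i) = 1"
    using diag by (simp add: idm_def)
  also have "(\<Prod>k < length c. idm (c ! k) (succ k) - A (c ! k) (succ k))
      = (\<Prod>k < length c. - A (c ! k) (succ k))"
  proof (rule prod.cong[OF refl])
    fix k assume "k \<in> {..<length c}"
    \<comment> \<open>the edge weight is nonzero while the diagonal of A vanishes\<close>
    then have "succ k \<noteq> c ! k" using edge diag nth_mem by fastforce
    then show "idm (c ! k) (succ k) - A (c ! k) (succ k) = - A (c ! k) (succ k)"
      by (simp add: idm_def)
  qed
  finally show ?thesis by (simp add: succ_def prod_uminus)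
qed

theorem mainTheorem6:
  fixes n :: nat and A :: "nat \<Rightarrow> nat \<Rightarrow> real" and c :: "nat list"
  assumes "omega01 n A"
    and "directed_cycle n A c"
  shows "per_on {..<n} (\<lambda>i j. idm i j - A i j)
       = per_on ({..<n} - set c) (\<lambda>i j. idm i j - A i j)
         * (1 + (-1) ^ length c * (\<Prod>k < length c. A (c ! k) (c ! ((k + 1) mod length c))))"
proof -
  have cycle_rows: "idm i j - A i j = 0" if "i \<in> set c" "j \<in> {..<n} - set c" for i j
  proof -
    obtain k where k: "k < length c" "i = c ! k" using \<open>i \<in> set c\<close> by (auto simp: in_set_conv_nth)
    have "c ! ((k + 1) mod length c) \<in> set c"
      using k(1) by (intro nth_mem mod_less_divisor) linarith
    then have "j \<noteq> c ! k" "j \<noteq> c ! ((k + 1) mod length c)"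
      using that(2) nth_mem[OF k(1)] by auto
    then show ?thesis
      using omega01_cycle_row_support[OF assms k(1), of j] that(2) k(2) by auto
  qed
  have "per_on {..<n} (\<lambda>i j. idm i j - A i j)
      = per_on (set c) (\<lambda>i j. idm i j - A i j) * per_on ({..<n} - set c) (\<lambda>i j. idm i j - A i j)"
    using directed_cycle_subset[OF assms(2)] cycle_rows by (intro per_on_block_triangular) auto
  then show ?thesis
    by (simp add: omega01_per_on_cycle[OF assms] mult.commute)
qed

end
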